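(* Let $\varphi\colon M\rightarrow N$ be a homomorphism of monoids with $M$ finitely generated and $N$ finite. Then the kernel category $K_{\varphi}$ is finitely generated (as a category).
   Context: Composition in categories is written diagrammatically ($fg$ means first $f$ then $g$). The kernel category $K_{\varphi}$ of a monoid homomorphism $\varphi\colon M\to N$ is the small category with object set $N\times N$, whose arrows are equivalence classes $[n_1,m,n_2]$ of triples $(n_1,m,n_2)\in N\times M\times N$, with $[n_1,m,n_2]\colon (n_1,\varphi(m)n_2)\rightarrow (n_1\varphi(m),n_2)$; two triples $(n_1,m,n_2)$ and $(n_1,m',n_2)$ are identified if $n_1\varphi(m)=n_1\varphi(m')$, $\varphi(m)n_2=\varphi(m')n_2$, and $m_1mm_2=m_1m'm_2$ for all $m_1\in\varphi^{-1}(n_1)$, $m_2\in\varphi^{-1}(n_2)$. Composition is $[n_1,m,\varphi(m')n_2][n_1\varphi(m),m',n_2]=[n_1,mm',n_2]$, and the identity at $(n_1,n_2)$ is $[n_1,1,n_2]$. A category is finitely generated if there is a finite set of arrows such that every arrow is a composite of these arrows and identities. *)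

theory Defs
  imports "HOL-Algebra.Group"
begin

definition mon_hom :: "('a,'c) monoid_scheme \<Rightarrow> ('b,'d) monoid_scheme \<Rightarrow> ('a \<Rightarrow> 'b) set" where
  "mon_hom M N = {h. h \<in> carrier M \<rightarrow> carrier N
      \<and> (\<forall>x\<in>carrier M. \<forall>y\<in>carrier M. h (x \<otimes>\<^bsub>M\<^esub> y) = h x \<otimes>\<^bsub>N\<^esub> h y)
      \<and> h \<one>\<^bsub>M\<^esub> = \<one>\<^bsub>N\<^esub>}"

inductive_set mon_gen :: "('a,'c) monoid_scheme \<Rightarrow> 'a set \<Rightarrow> 'a set"
  for M :: "('a,'c) monoid_scheme" and S :: "'a set" where
  one: "\<one>\<^bsub>M\<^esub> \<in> mon_gen M S"
| gen: "s \<in> S \<Longrightarrow> s \<in> mon_gen M S"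
| mult: "x \<in> mon_gen M S \<Longrightarrow> y \<in> mon_gen M S \<Longrightarrow> x \<otimes>\<^bsub>M\<^esub> y \<in> mon_gen M S"

definition fin_gen_monoid :: "('a,'c) monoid_scheme \<Rightarrow> bool" where
  "fin_gen_monoid M \<longleftrightarrow> (\<exists>S. finite S \<and> S \<subseteq> carrier M \<and> mon_gen M S = carrier M)"

definition ktriples :: "('a,'c) monoid_scheme \<Rightarrow> ('b,'d) monoid_scheme \<Rightarrow> ('b \<times> 'a \<times> 'b) set" where
  "ktriples M N = carrier N \<times> carrier M \<times> carrier N"

definition kequiv :: "('a,'c) monoid_scheme \<Rightarrow> ('b,'d) monoid_scheme \<Rightarrow> ('a \<Rightarrow> 'b)
    \<Rightarrow> ('b \<times> 'a \<times> 'b) \<Rightarrow> ('b \<times> 'a \<times> 'b) \<Rightarrow> bool" where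
  "kequiv M N \<phi> t t' \<longleftrightarrow> t \<in> ktriples M N \<and> t' \<in> ktriples M N \<and>
     (case t of (n1, m, n2) \<Rightarrow> case t' of (n1', m', n2') \<Rightarrow>
        n1 = n1' \<and> n2 = n2'
      \<and> n1 \<otimes>\<^bsub>N\<^esub> \<phi> m = n1 \<otimes>\<^bsub>N\<^esub> \<phi> m'
      \<and> \<phi> m \<otimes>\<^bsub>N\<^esub> n2 = \<phi> m' \<otimes>\<^bsub>N\<^esub> n2
      \<and> (\<forall>m1\<in>carrier M. \<forall>m2\<in>carrier M. \<phi> m1 = n1 \<longrightarrow> \<phi> m2 = n2 \<longrightarrow>
            m1 \<otimes>\<^bsub>M\<^esub> m \<otimes>\<^bsub>M\<^esub> m2 = m1 \<otimes>\<^bsub>M\<^esub> m' \<otimes>\<^bsub>M\<^esub> m2))"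

text \<open>The arrow [n1, m, n2]: the equivalence class of the triple.\<close>
definition karrow :: "('a,'c) monoid_scheme \<Rightarrow> ('b,'d) monoid_scheme \<Rightarrow> ('a \<Rightarrow> 'b)
    \<Rightarrow> 'b \<Rightarrow> 'a \<Rightarrow> 'b \<Rightarrow> ('b \<times> 'a \<times> 'b) set" where
  "karrow M N \<phi> n1 m n2 = {t. kequiv M N \<phi> (n1, m, n2) t}"

definition karrows :: "('a,'c) monoid_scheme \<Rightarrow> ('b,'d) monoid_scheme \<Rightarrow> ('a \<Rightarrow> 'b)
    \<Rightarrow> ('b \<times> 'a \<times> 'b) set set" where
  "karrows M N \<phi> = {karrow M N \<phi> n1 m n2 | n1 m n2. (n1, m, n2) \<in> ktriples M N}"

definition kid :: "('a,'c) monoid_scheme \<Rightarrow> ('b,'d) monoid_scheme \<Rightarrow> ('a \<Rightarrow> 'b)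
    \<Rightarrow> 'b \<Rightarrow> 'b \<Rightarrow> ('b \<times> 'a \<times> 'b) set" where
  "kid M N \<phi> n1 n2 = karrow M N \<phi> n1 \<one>\<^bsub>M\<^esub> n2"

text \<open>Composition (diagrammatic): kcomp a b c means that c = a b, i.e.
  a = [n1, m, phi(m') n2], b = [n1 phi(m), m', n2], c = [n1, m m', n2].
  Every composable pair admits representatives of this form.\<close>
definition kcomp :: "('a,'c) monoid_scheme \<Rightarrow> ('b,'d) monoid_scheme \<Rightarrow> ('a \<Rightarrow> 'b)
    \<Rightarrow> ('b \<times> 'a \<times> 'b) set \<Rightarrow> ('b \<times> 'a \<times> 'b) set \<Rightarrow> ('b \<times> 'a \<times> 'b) set \<Rightarrow> bool" where
  "kcomp M N \<phi> a b c \<longleftrightarrow> (\<exists>n1\<in>carrier N. \<exists>m\<in>carrier M. \<exists>m'\<in>carrier M. \<exists>n2\<in>carrier N.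
      a = karrow M N \<phi> n1 m (\<phi> m' \<otimes>\<^bsub>N\<^esub> n2)
    \<and> b = karrow M N \<phi> (n1 \<otimes>\<^bsub>N\<^esub> \<phi> m) m' n2
    \<and> c = karrow M N \<phi> n1 (m \<otimes>\<^bsub>M\<^esub> m') n2)"

inductive_set kgen :: "('a,'c) monoid_scheme \<Rightarrow> ('b,'d) monoid_scheme \<Rightarrow> ('a \<Rightarrow> 'b)
    \<Rightarrow> ('b \<times> 'a \<times> 'b) set set \<Rightarrow> ('b \<times> 'a \<times> 'b) set set"
  for M N \<phi> G where
  ident: "n1 \<in> carrier N \<Longrightarrow> n2 \<in> carrier N \<Longrightarrow> kid M N \<phi> n1 n2 \<in> kgen M N \<phi> G"
| gen: "g \<in> G \<Longrightarrow> g \<in> kgen M N \<phi> G"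
| comp: "a \<in> kgen M N \<phi> G \<Longrightarrow> b \<in> kgen M N \<phi> G \<Longrightarrow> kcomp M N \<phi> a b c \<Longrightarrow> c \<in> kgen M N \<phi> G"

definition kernel_cat_fin_gen :: "('a,'c) monoid_scheme \<Rightarrow> ('b,'d) monoid_scheme \<Rightarrow> ('a \<Rightarrow> 'b) \<Rightarrow> bool" where
  "kernel_cat_fin_gen M N \<phi> \<longleftrightarrow>
     (\<exists>G. finite G \<and> G \<subseteq> karrows M N \<phi> \<and> karrows M N \<phi> \<subseteq> kgen M N \<phi> G)"

end

theory Submission
  imports Defs
begin

text \<open>If S generates M, the arrows [n1, s, n2] with s \<in> S generate the kernel category:
  there are finitely many of them when S and N are finite, and since [n1, m m', n2] is the
  composite of [n1, m, \<phi>(m') n2] and [n1 \<phi>(m), m', n2], induction on products of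
  generators reaches every arrow [n1, m, n2].\<close>

lemma mon_gen_subset_carrier:
  assumes "monoid M" and "S \<subseteq> carrier M"
  shows "mon_gen M S \<subseteq> carrier M"
proof
  fix x assume "x \<in> mon_gen M S"
  then show "x \<in> carrier M"
    by induction (use assms in \<open>auto intro: monoid.m_closed monoid.one_closed\<close>)
qed

definition kgenerators :: "('a,'c) monoid_scheme \<Rightarrow> ('b,'d) monoid_scheme \<Rightarrow> ('a \<Rightarrow> 'b)
    \<Rightarrow> 'a set \<Rightarrow> ('b \<times> 'a \<times> 'b) set set" where
  "kgenerators M N \<phi> S = (\<lambda>(n1, s, n2). karrow M N \<phi> n1 s n2) ` (carrier N \<times> S \<times> carrier N)"

lemma finite_kgenerators:
  assumes "finite S" and "finite (carrier N)"
  shows "finite (kgenerators M N \<phi> S)"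
  using assms unfolding kgenerators_def by simp

lemma kgenerators_subset_karrows:
  assumes "S \<subseteq> carrier M"
  shows "kgenerators M N \<phi> S \<subseteq> karrows M N \<phi>"
  using assms unfolding kgenerators_def karrows_def ktriples_def by auto

lemma kcomp_karrow_mult:
  assumes "n1 \<in> carrier N" "n2 \<in> carrier N" "m \<in> carrier M" "m' \<in> carrier M"
  shows "kcomp M N \<phi> (karrow M N \<phi> n1 m (\<phi> m' \<otimes>\<^bsub>N\<^esub> n2))
           (karrow M N \<phi> (n1 \<otimes>\<^bsub>N\<^esub> \<phi> m) m' n2) (karrow M N \<phi> n1 (m \<otimes>\<^bsub>M\<^esub> m') n2)"
  unfolding kcomp_def using assms by fast

lemma karrow_mon_gen_in_kgen:
  assumes "monoid M" "monoid N" "\<phi> \<in> carrier M \<rightarrow> carrier N" "S \<subseteq> carrier M"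
    and "m \<in> mon_gen M S" "n1 \<in> carrier N" "n2 \<in> carrier N"
  shows "karrow M N \<phi> n1 m n2 \<in> kgen M N \<phi> (kgenerators M N \<phi> S)"
  using assms(5-7)
proof (induction arbitrary: n1 n2)
  case one
  then show ?case using kgen.ident[of n1 N n2 M \<phi>] unfolding kid_def by simp
next
  case (gen s)
  then show ?case unfolding kgenerators_def by (intro kgen.gen) auto
next
  case (mult x y)
  have x: "x \<in> carrier M" and y: "y \<in> carrier M"
    using mult.hyps mon_gen_subset_carrier[OF assms(1,4)] by auto
  have "\<phi> x \<in> carrier N" "\<phi> y \<in> carrier N"
    using x y assms(3) by auto
  then have "n1 \<otimes>\<^bsub>N\<^esub> \<phi> x \<in> carrier N" "\<phi> y \<otimes>\<^bsub>N\<^esub> n2 \<in> carrier N"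
    using mult.prems monoid.m_closed[OF assms(2)] by auto
  then have "karrow M N \<phi> n1 x (\<phi> y \<otimes>\<^bsub>N\<^esub> n2) \<in> kgen M N \<phi> (kgenerators M N \<phi> S)"
    and "karrow M N \<phi> (n1 \<otimes>\<^bsub>N\<^esub> \<phi> x) y n2 \<in> kgen M N \<phi> (kgenerators M N \<phi> S)"
    using mult.IH mult.prems by simp_all
  then show ?case
    by (rule kgen.comp[OF _ _ kcomp_karrow_mult[OF mult.prems x y]])
qed

lemma karrows_subset_kgen_kgenerators:
  assumes "monoid M" "monoid N" "\<phi> \<in> carrier M \<rightarrow> carrier N"
    and "S \<subseteq> carrier M" "mon_gen M S = carrier M"
  shows "karrows M N \<phi> \<subseteq> kgen M N \<phi> (kgenerators M N \<phi> S)"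
proof -
  have "karrow M N \<phi> n1 m n2 \<in> kgen M N \<phi> (kgenerators M N \<phi> S)"
    if "(n1, m, n2) \<in> ktriples M N" for n1 m n2
    by (rule karrow_mon_gen_in_kgen[OF assms(1-4)])
      (use that assms(5) in \<open>auto simp: ktriples_def\<close>)
  then show ?thesis
    unfolding karrows_def by blast
qed

theorem proposition2p3:
  fixes M :: "('a,'c) monoid_scheme" and N :: "('b,'d) monoid_scheme" and \<phi> :: "'a \<Rightarrow> 'b"
  assumes "monoid M" and "monoid N"
    and "\<phi> \<in> mon_hom M N"
    and "fin_gen_monoid M"
    and "finite (carrier N)"
  shows "kernel_cat_fin_gen M N \<phi>"
proof -
  obtain S where S: "finite S" "S \<subseteq> carrier M" "mon_gen M S = carrier M"
    using assms(4) unfolding fin_gen_monoid_def by blast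
  have "\<phi> \<in> carrier M \<rightarrow> carrier N"
    using assms(3) unfolding mon_hom_def by blast
  then have "karrows M N \<phi> \<subseteq> kgen M N \<phi> (kgenerators M N \<phi> S)"
    using karrows_subset_kgen_kgenerators[OF assms(1,2) _ S(2,3)] by simp
  with finite_kgenerators[OF S(1) assms(5)] kgenerators_subset_karrows[OF S(2)] show ?thesis
    unfolding kernel_cat_fin_gen_def by (intro exI conjI)
qed

end
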